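(* Let $K\ge 2$, and fix $P_1^{\rm ST},\ldots,P_K^{\rm ST}>0$ and $\Gamma_1^{\rm ST},\ldots,\Gamma_M^{\rm ST}>0$. For a channel realization $\boldsymbol{\alpha}$ consider the problem $$\max_{p_1,\ldots,p_K}\ \log\Big(1+\sum_{k=1}^K h_kp_k\Big)\quad\text{s.t.}\quad p_k\le P_k^{\rm ST}\ \forall k,\quad \sum_{k=1}^K g_{km}p_k\le\Gamma_m^{\rm ST}\ \forall m,\quad p_k\ge0\ \forall k.$$ For almost every realization $\boldsymbol{\alpha}$: this problem has an optimal solution in which only one user $i$ has positive power (D-TDMA is optimal) if and only if there exists a user $i$ which, with $m'=\arg\min_{m\in\{1,\ldots,M\}}\Gamma_m^{\rm ST}/g_{im}$, satisfies both (1) $\frac{\Gamma_{m'}^{\rm ST}}{g_{im'}}\le P_i^{\rm ST}$, and (2) $\frac{h_i}{g_{im'}}\ge\frac{h_j}{g_{jm'}}$ for all $j\ne i$. In that case the optimal transmit power of user $i$ is $p_i^*=\frac{\Gamma_{m'}^{\rm ST}}{g_{im'}}$ and all other users have zero power.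
   Context: $\boldsymbol{\alpha}=(h_1,\ldots,h_K,g_{11},\ldots,g_{KM})$ is a random vector of nonnegative channel power gains ($h_k$: secondary user $k$ to secondary base station; $g_{km}$: secondary user $k$ to primary receiver $m$) with a continuous, differentiable joint cumulative distribution function, the $h_k$'s and $g_{km}$'s being independent. *)

theory Defs
  imports "HOL-Analysis.Analysis"
begin

text \<open>Users are indexed by the finite type 'k (K = CARD('k)), primary receivers by
  the finite type 'm (M = CARD('m)).  h $ k is the gain from secondary user k to the
  secondary base station, g $ k $ m the gain from secondary user k to primary receiver m.\<close>

definition feasible ::
  "real^'k \<Rightarrow> real^'m \<Rightarrow> real^'m^'k \<Rightarrow> real^'k \<Rightarrow> bool" where
  "feasible Pmax Gam g p \<longleftrightarrow>
     (\<forall>k. 0 \<le> p $ k \<and> p $ k \<le> Pmax $ k) \<and>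
     (\<forall>m. (\<Sum>k\<in>UNIV. g $ k $ m * p $ k) \<le> Gam $ m)"

definition rate :: "real^'k \<Rightarrow> real^'k \<Rightarrow> real" where
  "rate h p = ln (1 + (\<Sum>k\<in>UNIV. h $ k * p $ k))"

definition optimal ::
  "real^'k \<Rightarrow> real^'m \<Rightarrow> real^'k \<Rightarrow> real^'m^'k \<Rightarrow> real^'k \<Rightarrow> bool" where
  "optimal Pmax Gam h g p \<longleftrightarrow>
     feasible Pmax Gam g p \<and> (\<forall>q. feasible Pmax Gam g q \<longrightarrow> rate h q \<le> rate h p)"

definition single_user :: "real^'k \<Rightarrow> 'k \<Rightarrow> bool" where
  "single_user p i \<longleftrightarrow> 0 < p $ i \<and> (\<forall>j. j \<noteq> i \<longrightarrow> p $ j = 0)"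

definition dtdma_cond ::
  "real^'k \<Rightarrow> real^'m \<Rightarrow> real^'k \<Rightarrow> real^'m^'k \<Rightarrow> 'k \<Rightarrow> 'm \<Rightarrow> bool" where
  "dtdma_cond Pmax Gam h g i m' \<longleftrightarrow>
     (\<forall>m. Gam $ m' / g $ i $ m' \<le> Gam $ m / g $ i $ m) \<and>
     Gam $ m' / g $ i $ m' \<le> Pmax $ i \<and>
     (\<forall>j. j \<noteq> i \<longrightarrow> h $ j / g $ j $ m' \<le> h $ i / g $ i $ m')"

definition dtdma_power :: "real^'m \<Rightarrow> real^'m^'k \<Rightarrow> 'k \<Rightarrow> 'm \<Rightarrow> real^'k" where
  "dtdma_power Gam g i m' = (\<chi> j. if j = i then Gam $ m' / g $ i $ m' else 0)"

end

theory Submission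
  imports Defs
begin

text \<open>The rate is monotone in the received power \<Sum>k. h k p k, so the problem is a linear
  programme.  If only user i transmits, its power is limited
  by Pmax i and by the tightest interference constraint m', i.e. by min over m of
  Gam m / g i m.  Sufficiency: when this minimum is attained below Pmax i and user i has the
  best ratio h / g at m', the m'-th interference constraint alone bounds the received power
  of every feasible vector by (h i / g i m') Gam m'.  Necessity: at an optimal single-user
  point some interference constraint must be active, since otherwise another user could be
  switched on with a little power; for almost every channel the ratios Gam m / g i m are
  pairwise distinct, so only m' is active, and then shifting power from user i to a user j
  with a better ratio h j / g j m' keeps constraint m' tight, leaves slack in the others
  and strictly increases the received power.  The exceptional channels lie in finitely many
  hyperplanes, a Lebesgue null set.\<close>

lemma sum_mult_delta:
  fixes f :: "'k::finite \<Rightarrow> 'a::comm_semiring_1"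
  shows "(\<Sum>k\<in>UNIV. f k * (if k = i then a else 0)) = f i * a"
  by (simp add: if_distrib[of "\<lambda>x. _ * x"] cong: if_cong)

lemma sum_mult_delta2:
  fixes f :: "'k::finite \<Rightarrow> 'a::comm_semiring_1"
  assumes "i \<noteq> j"
  shows "(\<Sum>k\<in>UNIV. f k * (if k = i then a else if k = j then b else 0)) = f i * a + f j * b"
  using assms by (simp add: if_distrib[of "\<lambda>x. _ * x"] sum.If_cases cong: if_cong)

lemma rate_le_rate_iff:
  assumes "\<forall>k. 0 \<le> h $ k" "\<forall>k. 0 \<le> q $ k" "\<forall>k. 0 \<le> p $ k"
  shows "rate h q \<le> rate h p \<longleftrightarrow> (\<Sum>k\<in>UNIV. h $ k * q $ k) \<le> (\<Sum>k\<in>UNIV. h $ k * p $ k)"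
proof -
  have "0 \<le> (\<Sum>k\<in>UNIV. h $ k * q $ k)" "0 \<le> (\<Sum>k\<in>UNIV. h $ k * p $ k)"
    using assms by (auto intro!: sum_nonneg)
  then show ?thesis
    unfolding rate_def by simp
qed

lemma eventually_at_right_0_affine_less:
  fixes a b c :: real
  assumes "a < b"
  shows "\<forall>\<^sub>F \<delta> in at_right 0. a + c * \<delta> < b"
proof -
  have "((\<lambda>\<delta>. a + c * \<delta>) \<longlongrightarrow> a + c * 0) (at_right 0)"
    by (intro tendsto_intros)
  then show ?thesis
    using assms by (auto dest: order_tendstoD)
qed

lemma ex_pos_at_right_0:
  assumes "\<forall>\<^sub>F \<delta> in at_right (0::real). P \<delta>"
  shows "\<exists>\<delta>>0. P \<delta>"
proof -
  have "\<forall>\<^sub>F \<delta> in at_right 0. 0 < \<delta> \<and> P \<delta>"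
    using eventually_at_right_less assms by (rule eventually_conj)
  from eventually_happens[OF this] show ?thesis
    using trivial_limit_at_right_real by auto
qed

lemma received_power_le_interference:
  assumes "\<forall>k. h $ k \<le> r * g $ k $ m" "0 \<le> r" "feasible Pmax Gam g q"
  shows "(\<Sum>k\<in>UNIV. h $ k * q $ k) \<le> r * Gam $ m"
proof -
  have q_nonneg: "0 \<le> q $ k" for k
    using assms(3) by (simp add: feasible_def)
  have "h $ k * q $ k \<le> r * g $ k $ m * q $ k" for k
    using assms(1) q_nonneg by (simp add: mult_right_mono)
  then have "(\<Sum>k\<in>UNIV. h $ k * q $ k) \<le> (\<Sum>k\<in>UNIV. r * (g $ k $ m * q $ k))"
    by (intro sum_mono) (simp add: mult.assoc)
  also have "\<dots> = r * (\<Sum>k\<in>UNIV. g $ k $ m * q $ k)"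
    by (simp add: sum_distrib_left)
  also have "\<dots> \<le> r * Gam $ m"
    using assms(2,3) by (intro mult_left_mono) (auto simp: feasible_def)
  finally show ?thesis .
qed

lemma dtdma_power_optimal:
  assumes h: "\<forall>k. 0 \<le> h $ k" and g: "\<forall>k m. 0 < g $ k $ m"
    and Gam: "\<forall>m. 0 \<le> Gam $ m" and Pmax: "\<forall>k. 0 \<le> Pmax $ k"
    and cond: "dtdma_cond Pmax Gam h g i m'"
  shows "optimal Pmax Gam h g (dtdma_power Gam g i m')"
proof -
  define c where "c = Gam $ m' / g $ i $ m'"
  define p where "p = dtdma_power Gam g i m'"
  have p: "p $ k = (if k = i then c else 0)" for k
    by (simp add: p_def dtdma_power_def c_def)
  have c_nonneg: "0 \<le> c"
    using Gam g by (simp add: c_def less_imp_le)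
  have "c \<le> Gam $ m / g $ i $ m" for m
    using cond by (simp add: dtdma_cond_def c_def)
  then have "g $ i $ m * c \<le> Gam $ m" for m
    using g by (simp add: le_divide_eq mult.commute)
  moreover have "c \<le> Pmax $ i"
    using cond by (simp add: dtdma_cond_def c_def)
  ultimately have feasible_p: "feasible Pmax Gam g p"
    using c_nonneg Pmax by (simp add: feasible_def p sum_mult_delta)
  have best_ratio: "h $ k \<le> h $ i / g $ i $ m' * g $ k $ m'" for k
  proof (cases "k = i")
    case False
    then have "h $ k / g $ k $ m' \<le> h $ i / g $ i $ m'"
      using cond by (simp add: dtdma_cond_def)
    then show ?thesis
      using g by (simp add: divide_le_eq)
  qed (use g[rule_format, of i m'] in simp)
  have "rate h q \<le> rate h p" if "feasible Pmax Gam g q" for q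
  proof -
    have "(\<Sum>k\<in>UNIV. h $ k * q $ k) \<le> h $ i / g $ i $ m' * Gam $ m'"
      using best_ratio h g that by (intro received_power_le_interference) (auto simp: less_imp_le)
    also have "\<dots> = (\<Sum>k\<in>UNIV. h $ k * p $ k)"
      by (simp add: p sum_mult_delta c_def)
    finally show ?thesis
      using that h c_nonneg by (subst rate_le_rate_iff) (auto simp: feasible_def p)
  qed
  with feasible_p show ?thesis
    by (simp add: optimal_def p_def)
qed

lemma feasible_Pmax_nonneg:
  assumes "feasible Pmax Gam g p"
  shows "0 \<le> Pmax $ k"
  using assms unfolding feasible_def by (meson order_trans)

lemma feasible_single_userD:
  assumes "feasible Pmax Gam g p" "single_user p i"
  shows "p $ i \<le> Pmax $ i" "g $ i $ m * p $ i \<le> Gam $ m"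
proof -
  have "(\<Sum>k\<in>UNIV. g $ k $ m * p $ k) = (\<Sum>k\<in>UNIV. g $ k $ m * (if k = i then p $ i else 0))"
    using assms(2) unfolding single_user_def by (intro sum.cong) auto
  also have "\<dots> = g $ i $ m * p $ i"
    by (rule sum_mult_delta)
  finally show "p $ i \<le> Pmax $ i" "g $ i $ m * p $ i \<le> Gam $ m"
    using assms(1) unfolding feasible_def by metis+
qed

lemma optimal_single_user_dominates:
  assumes "\<forall>k. 0 \<le> h $ k" "optimal Pmax Gam h g p" "single_user p i" "feasible Pmax Gam g q"
  shows "(\<Sum>k\<in>UNIV. h $ k * q $ k) \<le> h $ i * p $ i"
proof -
  have p: "p $ k = (if k = i then p $ i else 0)" for k
    using assms(3) by (simp add: single_user_def)
  have "rate h q \<le> rate h p"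
    using assms(2,4) by (simp add: optimal_def)
  then have "(\<Sum>k\<in>UNIV. h $ k * q $ k) \<le> (\<Sum>k\<in>UNIV. h $ k * p $ k)"
    using assms by (subst (asm) rate_le_rate_iff) (auto simp: feasible_def optimal_def)
  also have "\<dots> = h $ i * p $ i"
    by (subst p) (simp add: sum_mult_delta)
  finally show ?thesis .
qed

lemma optimal_single_user_active_constraint:
  assumes h: "\<forall>k. 0 \<le> h $ k" and opt: "optimal Pmax Gam h g p" and su: "single_user p i"
    and j: "j \<noteq> i" "0 < h $ j" "0 < Pmax $ j"
  shows "\<exists>m. g $ i $ m * p $ i = Gam $ m"
proof (rule ccontr)
  assume inactive: "\<nexists>m. g $ i $ m * p $ i = Gam $ m"
  have "feasible Pmax Gam g p"
    using opt by (simp add: optimal_def)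
  then have "g $ i $ m * p $ i \<le> Gam $ m" for m
    using su by (rule feasible_single_userD)
  with inactive have slack: "g $ i $ m * p $ i < Gam $ m" for m
    by (simp add: order_le_less)
  note Pmax = feasible_Pmax_nonneg[OF \<open>feasible Pmax Gam g p\<close>]
  have "\<forall>\<^sub>F \<delta> in at_right 0.
      0 + 1 * \<delta> < Pmax $ j \<and> (\<forall>m. g $ i $ m * p $ i + g $ j $ m * \<delta> < Gam $ m)"
    using j slack
    by (intro eventually_conj eventually_all_finite allI eventually_at_right_0_affine_less)
  then obtain \<delta> where \<delta>: "0 < \<delta>" "\<delta> < Pmax $ j"
      "\<forall>m. g $ i $ m * p $ i + g $ j $ m * \<delta> < Gam $ m"
    using ex_pos_at_right_0 by force
  define q where "q = (\<chi> k. if k = i then p $ i else if k = j then \<delta> else 0)"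
  have q: "q $ k = (if k = i then p $ i else if k = j then \<delta> else 0)" for k
    by (simp add: q_def)
  have "feasible Pmax Gam g q"
    using \<open>feasible Pmax Gam g p\<close> \<delta> Pmax slack
    unfolding feasible_def q sum_mult_delta2[OF j(1)[symmetric]] by (auto simp: less_imp_le)
  then have "(\<Sum>k\<in>UNIV. h $ k * q $ k) \<le> h $ i * p $ i"
    by (rule optimal_single_user_dominates[OF h opt su])
  then have "h $ i * p $ i + h $ j * \<delta> \<le> h $ i * p $ i"
    by (simp only: q sum_mult_delta2[OF j(1)[symmetric]])
  moreover have "0 < h $ j * \<delta>"
    using \<delta> j by simp
  ultimately show False
    by simp
qed

lemma optimal_single_user_best_ratio:
  assumes h: "\<forall>k. 0 \<le> h $ k" and opt: "optimal Pmax Gam h g p" and su: "single_user p i"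
    and j: "j \<noteq> i" "0 < Pmax $ j" "0 \<le> g $ j $ m'"
    and gim': "0 < g $ i $ m'"
    and active: "g $ i $ m' * p $ i = Gam $ m'"
    and slack: "\<forall>m. m \<noteq> m' \<longrightarrow> g $ i $ m * p $ i < Gam $ m"
  shows "h $ j / g $ j $ m' \<le> h $ i / g $ i $ m'"
proof (rule ccontr)
  assume "\<not> ?thesis"
  then have ratio: "h $ i / g $ i $ m' < h $ j / g $ j $ m'"
    by simp
  have gjm': "0 < g $ j $ m'"
  proof (rule ccontr)
    assume "\<not> 0 < g $ j $ m'"
    with j(3) ratio divide_nonneg_pos[OF h[rule_format, of i] gim'] show False
      by simp
  qed
  define c where "c = g $ j $ m' / g $ i $ m'"
  have "h $ i / g $ i $ m' * g $ j $ m' < h $ j"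
    using ratio gjm' by (simp add: less_divide_eq)
  then have better: "h $ i * c < h $ j"
    by (simp add: c_def)
  have c: "0 \<le> c"
    using gim' gjm' by (simp add: c_def)
  have feasible_p: "feasible Pmax Gam g p"
    using opt by (simp add: optimal_def)
  note Pmax = feasible_Pmax_nonneg[OF feasible_p]
  have "g $ i $ m' * (p $ i - \<delta> * c) + g $ j $ m' * \<delta> = Gam $ m'" for \<delta>
    using active gim' by (simp add: c_def algebra_simps)
  then have interference:
    "\<forall>\<^sub>F \<delta> in at_right 0. g $ i $ m * (p $ i - \<delta> * c) + g $ j $ m * \<delta> \<le> Gam $ m" for m
  proof (cases "m = m'")
    case False
    have "\<forall>\<^sub>F \<delta> in at_right 0. g $ i $ m * p $ i + (g $ j $ m - g $ i $ m * c) * \<delta> < Gam $ m"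
      using slack False by (intro eventually_at_right_0_affine_less) simp
    then show ?thesis
      by eventually_elim (simp add: algebra_simps)
  qed simp
  have "0 < p $ i"
    using su by (simp add: single_user_def)
  then have "\<forall>\<^sub>F \<delta> in at_right 0. 0 + 1 * \<delta> < Pmax $ j \<and> 0 + c * \<delta> < p $ i \<and>
      (\<forall>m. g $ i $ m * (p $ i - \<delta> * c) + g $ j $ m * \<delta> \<le> Gam $ m)"
    using j(2) interference
    by (intro eventually_conj eventually_all_finite eventually_at_right_0_affine_less allI) simp_all
  then obtain \<delta> where "0 < \<delta>" and
      "0 + 1 * \<delta> < Pmax $ j \<and> 0 + c * \<delta> < p $ i \<and>
        (\<forall>m. g $ i $ m * (p $ i - \<delta> * c) + g $ j $ m * \<delta> \<le> Gam $ m)"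
    using ex_pos_at_right_0 by blast
  then have \<delta>: "0 < \<delta>" "\<delta> < Pmax $ j" "0 \<le> p $ i - \<delta> * c"
      "\<forall>m. g $ i $ m * (p $ i - \<delta> * c) + g $ j $ m * \<delta> \<le> Gam $ m"
    by (simp_all add: mult.commute)
  define q where "q = (\<chi> k. if k = i then p $ i - \<delta> * c else if k = j then \<delta> else 0)"
  have q: "q $ k = (if k = i then p $ i - \<delta> * c else if k = j then \<delta> else 0)" for k
    by (simp add: q_def)
  have "0 \<le> \<delta> * c"
    using \<delta>(1) c by simp
  then have "p $ i - \<delta> * c \<le> Pmax $ i"
    using feasible_single_userD(1)[OF feasible_p su] by linarith
  then have "feasible Pmax Gam g q"
    using \<delta> Pmax unfolding feasible_def q sum_mult_delta2[OF j(1)[symmetric]]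
    by (auto simp: less_imp_le)
  then have "(\<Sum>k\<in>UNIV. h $ k * q $ k) \<le> h $ i * p $ i"
    by (rule optimal_single_user_dominates[OF h opt su])
  then have "h $ i * (p $ i - \<delta> * c) + h $ j * \<delta> \<le> h $ i * p $ i"
    by (simp only: q sum_mult_delta2[OF j(1)[symmetric]])
  then have "h $ j * \<delta> \<le> h $ i * c * \<delta>"
    by (simp add: algebra_simps)
  with \<delta>(1) better show False
    by simp
qed

text \<open>The witness m' of dtdma_cond is the interference constraint that is active at the
  optimum; distinctness of the ratios Gam m / g i m makes it the only active one.\<close>

lemma optimal_single_user_imp_dtdma_cond:
  assumes K: "CARD('k) \<ge> 2"
    and h: "\<forall>k. 0 < h $ k" and g: "\<forall>k m. 0 < g $ k $ m" and Pmax: "\<forall>k. 0 < Pmax $ k"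
    and distinct: "\<forall>m1 m2. m1 \<noteq> m2 \<longrightarrow> Gam $ m1 * g $ i $ m2 \<noteq> Gam $ m2 * g $ i $ m1"
    and opt: "optimal Pmax Gam h (g :: real^'m^'k) p" and su: "single_user p i"
  shows "\<exists>m'. dtdma_cond Pmax Gam h g i m'"
proof -
  have h_nonneg: "\<forall>k. 0 \<le> h $ k"
    using h by (simp add: less_imp_le)
  have "\<not> (UNIV :: 'k set) \<subseteq> {i}"
  proof
    assume "(UNIV :: 'k set) \<subseteq> {i}"
    then have "CARD('k) \<le> card {i}"
      by (intro card_mono) simp_all
    with K show False
      by simp
  qed
  then obtain j :: 'k where "j \<noteq> i"
    by blast
  then obtain m' where active: "g $ i $ m' * p $ i = Gam $ m'"
    using optimal_single_user_active_constraint[OF h_nonneg opt su] h Pmax by meson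
  have "feasible Pmax Gam g p"
    using opt by (simp add: optimal_def)
  note feasible = feasible_single_userD[OF this su]
  have power: "p $ i = Gam $ m' / g $ i $ m'"
    using active g[rule_format, of i m'] by (simp add: eq_divide_eq mult.commute)
  have power_le: "p $ i \<le> Gam $ m / g $ i $ m" for m
    using feasible(2)[of m] g[rule_format, of i m] by (simp add: le_divide_eq mult.commute)
  have "g $ i $ m * p $ i \<noteq> Gam $ m" if "m \<noteq> m'" for m
  proof -
    have "Gam $ m' * g $ i $ m \<noteq> Gam $ m * g $ i $ m'"
      using distinct that by simp
    then show ?thesis
      using g[rule_format, of i m'] by (simp add: power divide_eq_eq ac_simps)
  qed
  then have slack: "\<forall>m. m \<noteq> m' \<longrightarrow> g $ i $ m * p $ i < Gam $ m"
    using feasible(2) by (auto intro: order_le_neq_trans)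
  have "h $ j / g $ j $ m' \<le> h $ i / g $ i $ m'" if "j \<noteq> i" for j
    using Pmax g
    by (intro optimal_single_user_best_ratio[OF h_nonneg opt su that _ _ _ active slack])
      (simp_all add: less_imp_le)
  then have "dtdma_cond Pmax Gam h g i m'"
    using power_le feasible(1) by (simp add: dtdma_cond_def power)
  then show ?thesis ..
qed

definition generic_channel :: "real^'m \<Rightarrow> real^'k \<Rightarrow> real^'m^'k \<Rightarrow> bool" where
  "generic_channel Gam h g \<longleftrightarrow>
     (\<forall>k. h $ k \<noteq> 0) \<and> (\<forall>k m. g $ k $ m \<noteq> 0) \<and>
     (\<forall>k m1 m2. m1 \<noteq> m2 \<longrightarrow> Gam $ m1 * g $ k $ m2 \<noteq> Gam $ m2 * g $ k $ m1)"

lemma dtdma_optimal_iff: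
  fixes Pmax h :: "real^'k" and Gam :: "real^'m" and g :: "real^'m^'k"
  assumes K: "CARD('k) \<ge> 2" and Pmax: "\<forall>k. 0 < Pmax $ k" and Gam: "\<forall>m. 0 < Gam $ m"
    and nonneg: "\<forall>k. 0 \<le> h $ k" "\<forall>k m. 0 \<le> g $ k $ m"
    and generic: "generic_channel Gam h g"
  shows "((\<exists>p i. optimal Pmax Gam h g p \<and> single_user p i) \<longleftrightarrow>
      (\<exists>i m'. dtdma_cond Pmax Gam h g i m')) \<and>
    (\<forall>i m'. dtdma_cond Pmax Gam h g i m' \<longrightarrow> optimal Pmax Gam h g (dtdma_power Gam g i m'))"
proof -
  have h: "\<forall>k. 0 < h $ k" and g: "\<forall>k m. 0 < g $ k $ m"
    using nonneg generic by (auto simp: generic_channel_def order_less_le)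
  have distinct: "\<forall>m1 m2. m1 \<noteq> m2 \<longrightarrow> Gam $ m1 * g $ i $ m2 \<noteq> Gam $ m2 * g $ i $ m1" for i
    using generic by (simp add: generic_channel_def)
  have "optimal Pmax Gam h g (dtdma_power Gam g i m')" if "dtdma_cond Pmax Gam h g i m'" for i m'
    using nonneg(1) g Gam Pmax that by (intro dtdma_power_optimal) (auto simp: less_imp_le)
  moreover have "single_user (dtdma_power Gam g i m') i" for i m'
    using g Gam by (simp add: single_user_def dtdma_power_def)
  moreover have "\<exists>m'. dtdma_cond Pmax Gam h g i m'"
    if "optimal Pmax Gam h g p" "single_user p i" for p i
    by (rule optimal_single_user_imp_dtdma_cond[OF K h g Pmax distinct that])
  ultimately show ?thesis
    by blast
qed

lemma AE_inner_ne_0: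
  fixes a :: "'a::euclidean_space"
  assumes "a \<noteq> 0"
  shows "AE x in lborel. a \<bullet> x \<noteq> 0"
proof -
  have "{x. a \<bullet> x = 0} \<in> null_sets lborel"
    using negligible_hyperplane[of a 0] assms closed_hyperplane[of a 0]
    by (auto simp: null_sets_completion_iff[symmetric] negligible_iff_null_sets)
  from AE_not_in[OF this] show ?thesis
    by auto
qed

lemma AE_generic_channel:
  assumes Gam: "\<forall>m. Gam $ m \<noteq> 0"
  shows "AE \<alpha> in (lborel :: ((real^'k) \<times> (real^'m^'k)) measure).
    generic_channel Gam (fst \<alpha>) (snd \<alpha>)"
proof -
  let ?M = "lborel :: ((real^'k) \<times> (real^'m^'k)) measure"
  have "AE \<alpha> in ?M. \<forall>k\<in>UNIV. fst \<alpha> $ k \<noteq> 0"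
  proof (rule AE_finite_allI)
    fix k :: 'k
    have "(axis k 1, 0) \<noteq> (0 :: (real^'k) \<times> (real^'m^'k))"
      by (simp add: zero_prod_def axis_eq_0_iff)
    from AE_inner_ne_0[OF this] show "AE \<alpha> in ?M. fst \<alpha> $ k \<noteq> 0"
      by (rule eventually_mono) (auto simp: inner_axis' inner_Pair_0)
  qed simp
  moreover have "AE \<alpha> in ?M. \<forall>k\<in>UNIV. \<forall>m\<in>UNIV. snd \<alpha> $ k $ m \<noteq> 0"
  proof (intro AE_finite_allI)
    fix k :: 'k and m :: 'm
    have "(0, axis k (axis m 1)) \<noteq> (0 :: (real^'k) \<times> (real^'m^'k))"
      by (simp add: zero_prod_def axis_eq_0_iff)
    from AE_inner_ne_0[OF this] show "AE \<alpha> in ?M. snd \<alpha> $ k $ m \<noteq> 0"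
      by (rule eventually_mono) (auto simp: inner_axis' inner_Pair_0)
  qed simp_all
  moreover have "AE \<alpha> in ?M. \<forall>k\<in>UNIV. \<forall>m1\<in>UNIV. \<forall>m2\<in>UNIV.
      m1 \<noteq> m2 \<longrightarrow> Gam $ m1 * snd \<alpha> $ k $ m2 - Gam $ m2 * snd \<alpha> $ k $ m1 \<noteq> 0"
  proof (intro AE_finite_allI)
    fix k :: 'k and m1 m2 :: 'm
    show "AE \<alpha> in ?M. m1 \<noteq> m2 \<longrightarrow> Gam $ m1 * snd \<alpha> $ k $ m2 - Gam $ m2 * snd \<alpha> $ k $ m1 \<noteq> 0"
    proof (cases "m1 = m2")
      case False
      define v :: "real^'m" where "v = Gam $ m1 *\<^sub>R axis m2 1 - Gam $ m2 *\<^sub>R axis m1 1"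
      have "v $ m2 = Gam $ m1"
        using False by (simp add: v_def axis_def)
      then have "(0, axis k v) \<noteq> (0 :: (real^'k) \<times> (real^'m^'k))"
        using Gam by (auto simp: zero_prod_def axis_eq_0_iff)
      from AE_inner_ne_0[OF this] show ?thesis
        by (rule eventually_mono) (auto simp: inner_axis' inner_Pair_0 v_def inner_diff_left)
    qed simp
  qed simp_all
  ultimately show ?thesis
    by eventually_elim (simp add: generic_channel_def)
qed

theorem theorem3p4:
  fixes Pmax :: "real^'k" and Gam :: "real^'m"
  assumes "CARD('k) \<ge> 2"
    and "\<forall>k. 0 < Pmax $ k"
    and "\<forall>m. 0 < Gam $ m"
  shows "AE \<alpha> in (lborel :: ((real^'k) \<times> (real^'m^'k)) measure).
           (\<forall>k. 0 \<le> fst \<alpha> $ k) \<and> (\<forall>k m. 0 \<le> snd \<alpha> $ k $ m) \<longrightarrow>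
           ((\<exists>p i. optimal Pmax Gam (fst \<alpha>) (snd \<alpha>) p \<and> single_user p i) \<longleftrightarrow>
              (\<exists>i m'. dtdma_cond Pmax Gam (fst \<alpha>) (snd \<alpha>) i m')) \<and>
           (\<forall>i m'. dtdma_cond Pmax Gam (fst \<alpha>) (snd \<alpha>) i m' \<longrightarrow>
              optimal Pmax Gam (fst \<alpha>) (snd \<alpha>) (dtdma_power Gam (snd \<alpha>) i m'))"
proof -
  have "\<forall>m. Gam $ m \<noteq> 0"
    using assms(3) by (metis less_irrefl)
  then have "AE \<alpha> in (lborel :: ((real^'k) \<times> (real^'m^'k)) measure).
      generic_channel Gam (fst \<alpha>) (snd \<alpha>)"
    by (rule AE_generic_channel)
  then show ?thesis
    by (rule eventually_mono) (use dtdma_optimal_iff[OF assms] in blast)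
qed

end
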